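(* Consider a market with $n$ sellers of true costs $c_1,\dots,c_n\in[0,1]$ and $n$ buyers of true values $v_1,\dots,v_n\in[0,1]$. Suppose reals $\underline c_i\le c_i\le\bar c_i$ and $\underline v_j\le v_j\le\bar v_j$ are known with $\bar c_i-\underline c_i\le\delta$ and $\bar v_j-\underline v_j\le\delta$ for all $i,j$. Let $M$ be a matching maximizing gains-from-trade when sellers have costs $\bar c_i$ and buyers have values $\underline v_j$, let $S_1$, $B_1$ be the sellers and buyers matched in $M$, and post the segmented-price mechanism: price $\max_{i\in S_1}\bar c_i$ to sellers in $S_1$ and price $0$ to the other sellers; price $\min_{j\in B_1}\underline v_j$ to buyers in $B_1$ and price $1$ to the other buyers. Then the realized gains-from-trade (under any maximum-cardinality matching of the accepting traders) is at least $\mathrm{GFT}^\star-2n\delta$, where $\mathrm{GFT}^\star$ is the optimal gains-from-trade for the true costs and values.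
   Context: A seller accepts a price $p$ iff $p\ge$ its cost; a buyer accepts price $q$ iff $q\le$ its value (ties in favour of accepting). A maximum-cardinality matching between accepting sellers and accepting buyers is formed, and the GFT of a matching $M$ is $\sum_{(i,j)\in M}(v_j-c_i)$. $\mathrm{GFT}^\star$ is the maximum GFT over all matchings between sellers and buyers. A segmented-price mechanism partitions sellers into at most two groups and buyers into at most two groups and posts one price per group. *)

theory Defs
  imports Complex_Main
begin

text \<open>Sellers and buyers are both indexed by 0..<n. A matching is a set of
(seller, buyer) pairs in which each seller and each buyer occurs at most once.\<close>

definition is_matching :: "nat \<Rightarrow> (nat \<times> nat) set \<Rightarrow> bool" where
  "is_matching n M \<longleftrightarrow> M \<subseteq> {..<n} \<times> {..<n} \<and>
     (\<forall>(i,j)\<in>M. \<forall>(i',j')\<in>M. (i = i') = (j = j'))"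

definition gft :: "(nat \<Rightarrow> real) \<Rightarrow> (nat \<Rightarrow> real) \<Rightarrow> (nat \<times> nat) set \<Rightarrow> real" where
  "gft c v M = (\<Sum>(i,j)\<in>M. v j - c i)"

definition GFT_star :: "nat \<Rightarrow> (nat \<Rightarrow> real) \<Rightarrow> (nat \<Rightarrow> real) \<Rightarrow> real" where
  "GFT_star n c v = Max (gft c v ` {M. is_matching n M})"

definition gft_optimal :: "nat \<Rightarrow> (nat \<Rightarrow> real) \<Rightarrow> (nat \<Rightarrow> real) \<Rightarrow> (nat \<times> nat) set \<Rightarrow> bool" where
  "gft_optimal n c v M \<longleftrightarrow> is_matching n M \<and>
     (\<forall>M'. is_matching n M' \<longrightarrow> gft c v M' \<le> gft c v M)"

definition accepting_sellers :: "nat \<Rightarrow> (nat \<Rightarrow> real) \<Rightarrow> (nat \<Rightarrow> real) \<Rightarrow> nat set" where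
  "accepting_sellers n c ps = {i. i < n \<and> c i \<le> ps i}"

definition accepting_buyers :: "nat \<Rightarrow> (nat \<Rightarrow> real) \<Rightarrow> (nat \<Rightarrow> real) \<Rightarrow> nat set" where
  "accepting_buyers n v pb = {j. j < n \<and> pb j \<le> v j}"

definition max_card_matching :: "nat \<Rightarrow> nat set \<Rightarrow> nat set \<Rightarrow> (nat \<times> nat) set \<Rightarrow> bool" where
  "max_card_matching n AS AB M \<longleftrightarrow> is_matching n M \<and> M \<subseteq> AS \<times> AB \<and>
     (\<forall>M'. is_matching n M' \<and> M' \<subseteq> AS \<times> AB \<longrightarrow> card M' \<le> card M)"

end

theory Submission
  imports Defs
begin

text \<open>Let \<open>M\<close> be optimal for the pessimistic estimates \<open>cu\<close>, \<open>vl\<close>. The segmented prices are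
  chosen so that every pair of \<open>M\<close> accepts, hence the realised matching is at least as large as
  \<open>M\<close>; and a trader outside \<open>M\<close> only accepts if it is extreme (a seller of cost 0 or a buyer of
  value 1). Trading such traders instead of those of \<open>M\<close> can only help, so the realised
  gains-from-trade are at least \<open>gft c v M\<close>. Finally, each of the at most \<open>n\<close> pairs of any
  matching loses at most \<open>2\<delta>\<close> when true values are replaced by the estimates, so by the
  optimality of \<open>M\<close> for the estimates, \<open>gft c v M \<ge> GFT\<^sup>\<star> - 2n\<delta>\<close>.\<close>

lemma is_matching_empty: "is_matching n {}"
  unfolding is_matching_def by simp

lemma is_matching_finite: "is_matching n M \<Longrightarrow> finite M"
  unfolding is_matching_def by (meson finite_SigmaI finite_lessThan finite_subset)

lemma is_matching_inj_on: "is_matching n M \<Longrightarrow> inj_on fst M \<and> inj_on snd M"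
  unfolding is_matching_def inj_on_def by fastforce

lemma is_matching_range: "is_matching n M \<Longrightarrow> fst ` M \<subseteq> {..<n} \<and> snd ` M \<subseteq> {..<n}"
  unfolding is_matching_def by force

lemma is_matching_card_image:
  "is_matching n M \<Longrightarrow> card (fst ` M) = card M \<and> card (snd ` M) = card M"
  using is_matching_inj_on card_image by blast

lemma is_matching_card_le: "is_matching n M \<Longrightarrow> card M \<le> n"
  using is_matching_card_image[of n M] is_matching_range[of n M]
  by (metis card_lessThan card_mono finite_lessThan)

lemma finite_matchings: "finite {M. is_matching n M}"
proof (rule finite_subset)
  show "{M. is_matching n M} \<subseteq> Pow ({..<n} \<times> {..<n})"
    unfolding is_matching_def by auto
qed auto

lemma GFT_star_le:
  assumes "\<And>M. is_matching n M \<Longrightarrow> gft c v M \<le> x"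
  shows "GFT_star n c v \<le> x"
  unfolding GFT_star_def using finite_matchings is_matching_empty assms
  by (subst Max_le_iff) auto

lemma gft_eq_diff_sums:
  assumes "is_matching n M"
  shows "gft c v M = (\<Sum>j\<in>snd ` M. v j) - (\<Sum>i\<in>fst ` M. c i)"
proof -
  have "gft c v M = (\<Sum>p\<in>M. v (snd p)) - (\<Sum>p\<in>M. c (fst p))"
    unfolding gft_def by (simp add: case_prod_beta sum_subtractf)
  then show ?thesis
    using is_matching_inj_on[OF assms] by (simp add: sum.reindex)
qed

lemma gft_le_add_card:
  assumes "\<And>i j. (i, j) \<in> M \<Longrightarrow> v j - c i \<le> v' j - c' i + d"
  shows "gft c v M \<le> gft c' v' M + real (card M) * d"
proof -
  have "gft c v M \<le> (\<Sum>(i, j)\<in>M. v' j - c' i + d)"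
    unfolding gft_def using assms by (intro sum_mono) auto
  also have "\<dots> = gft c' v' M + real (card M) * d"
    unfolding gft_def by (simp add: case_prod_beta sum.distrib)
  finally show ?thesis .
qed

lemma GFT_star_le_gft_of_perturbed_optimum:
  assumes opt: "gft_optimal n c' v' M"
    and c: "\<And>i. i < n \<Longrightarrow> c' i - \<delta> \<le> c i \<and> c i \<le> c' i"
    and v: "\<And>j. j < n \<Longrightarrow> v' j \<le> v j \<and> v j \<le> v' j + \<delta>"
  shows "GFT_star n c v \<le> gft c v M + 2 * real n * \<delta>"
proof (rule GFT_star_le)
  fix M' assume M': "is_matching n M'"
  have M: "is_matching n M" using opt unfolding gft_optimal_def by blast
  have in_range: "i < n \<and> j < n" if "is_matching n N" "(i, j) \<in> N" for N i j
    using that is_matching_range[of n N] by force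
  have "gft c v M' \<le> gft c' v' M' + real (card M') * (2 * \<delta>)"
  proof (rule gft_le_add_card)
    fix i j assume "(i, j) \<in> M'"
    with in_range[OF M'] c[of i] v[of j] show "v j - c i \<le> v' j - c' i + 2 * \<delta>" by auto
  qed
  also have "\<dots> \<le> gft c' v' M + real n * (2 * \<delta>)"
  proof -
    have "gft c' v' M' \<le> gft c' v' M" using opt M' unfolding gft_optimal_def by blast
    moreover have "real (card M') * \<delta> \<le> real n * \<delta>"
    proof (cases "n = 0")
      case False
      then have "0 \<le> \<delta>" using c[of 0] by linarith
      then show ?thesis using is_matching_card_le[OF M'] by (simp add: mult_right_mono)
    qed (use is_matching_card_le[OF M'] in simp)
    ultimately show ?thesis by linarith
  qed
  also have "gft c' v' M \<le> gft c v M + real (card M) * 0"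
  proof (rule gft_le_add_card)
    fix i j assume "(i, j) \<in> M"
    with in_range[OF M] c[of i] v[of j] show "v' j - c' i \<le> v j - c i + 0" by auto
  qed
  finally show "gft c v M' \<le> gft c v M + 2 * real n * \<delta>" by linarith
qed

lemma sum_le_sum_nonpos_outside:
  fixes c :: "'a \<Rightarrow> real"
  assumes "finite A" "finite S"
    and "\<And>i. i \<in> A - S \<Longrightarrow> c i \<le> 0" "\<And>i. i \<in> S - A \<Longrightarrow> 0 \<le> c i"
  shows "sum c A \<le> sum c S"
proof -
  have "sum c A = sum c (A \<inter> S) + sum c (A - S)" using assms(1) by (metis sum.Int_Diff)
  also have "\<dots> \<le> sum c (A \<inter> S) + sum c (S - A)"
    using assms(3,4) sum_nonpos[of "A - S" c] sum_nonneg[of "S - A" c] by auto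
  also have "\<dots> = sum c S" using assms(2) by (metis Int_commute sum.Int_Diff)
  finally show ?thesis .
qed

lemma sum_le_sum_of_larger_set_ge_one_outside:
  fixes v :: "'a \<Rightarrow> real"
  assumes "finite T" "finite B" "card T \<le> card B"
    and "\<And>j. j \<in> T - B \<Longrightarrow> v j \<le> 1" "\<And>j. j \<in> B - T \<Longrightarrow> 1 \<le> v j"
  shows "sum v T \<le> sum v B"
proof -
  have "card (T - B) \<le> card (B - T)"
    using assms(1-3) card_Int_Diff[of T B] card_Int_Diff[of B T] by (simp add: Int_commute)
  have "sum v T = sum v (T \<inter> B) + sum v (T - B)" using assms(1) by (metis sum.Int_Diff)
  also have "sum v (T - B) \<le> real (card (T - B))"
    using assms(4) sum_mono[of "T - B" v "\<lambda>_. 1"] by simp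
  also have "\<dots> \<le> real (card (B - T))" using \<open>card (T - B) \<le> card (B - T)\<close> by simp
  also have "\<dots> \<le> sum v (B - T)"
    using assms(5) sum_mono[of "B - T" "\<lambda>_. 1" v] by simp
  also have "sum v (T \<inter> B) + sum v (B - T) = sum v B"
    using assms(2) by (metis Int_commute sum.Int_Diff)
  finally show ?thesis by simp
qed

lemma gft_le_gft_of_larger_matching:
  assumes M: "is_matching n M" and M': "is_matching n M'" and "card M \<le> card M'"
    and "\<And>i. i \<in> fst ` M \<Longrightarrow> 0 \<le> c i" "\<And>i. i \<in> fst ` M' - fst ` M \<Longrightarrow> c i \<le> 0"
    and "\<And>j. j \<in> snd ` M \<Longrightarrow> v j \<le> 1" "\<And>j. j \<in> snd ` M' - snd ` M \<Longrightarrow> 1 \<le> v j"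
  shows "gft c v M \<le> gft c v M'"
proof -
  have fin: "finite M" "finite M'" using M M' by (simp_all add: is_matching_finite)
  have "(\<Sum>i\<in>fst ` M'. c i) \<le> (\<Sum>i\<in>fst ` M. c i)"
    using fin assms(4,5) by (intro sum_le_sum_nonpos_outside) auto
  moreover have "(\<Sum>j\<in>snd ` M. v j) \<le> (\<Sum>j\<in>snd ` M'. v j)"
    using fin assms(3,6,7) is_matching_card_image[OF M] is_matching_card_image[OF M']
    by (intro sum_le_sum_of_larger_set_ge_one_outside) auto
  ultimately show ?thesis by (simp add: gft_eq_diff_sums[OF M] gft_eq_diff_sums[OF M'])
qed

lemma matching_accepts_segmented_prices:
  assumes M: "is_matching n M"
    and c: "\<And>i. i < n \<Longrightarrow> c i \<le> cu i" and v: "\<And>j. j < n \<Longrightarrow> vl j \<le> v j"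
  shows "M \<subseteq> accepting_sellers n c (\<lambda>i. if i \<in> fst ` M then Max (cu ` fst ` M) else 0)
           \<times> accepting_buyers n v (\<lambda>j. if j \<in> snd ` M then Min (vl ` snd ` M) else 1)"
proof safe
  fix i j assume "(i, j) \<in> M"
  then have "i \<in> fst ` M" "j \<in> snd ` M" "i < n" "j < n"
    using is_matching_range[OF M] by force+
  have fin: "finite M" using is_matching_finite[OF M] .
  have "c i \<le> cu i" using c \<open>i < n\<close> .
  also have "\<dots> \<le> Max (cu ` fst ` M)" using fin \<open>i \<in> fst ` M\<close> by simp
  finally have "c i \<le> Max (cu ` fst ` M)" .
  have "Min (vl ` snd ` M) \<le> vl j" using fin \<open>j \<in> snd ` M\<close> by simp
  also have "\<dots> \<le> v j" using v \<open>j < n\<close> .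
  finally have "Min (vl ` snd ` M) \<le> v j" .
  with \<open>c i \<le> Max (cu ` fst ` M)\<close> \<open>i < n\<close> \<open>j < n\<close> \<open>i \<in> fst ` M\<close> \<open>j \<in> snd ` M\<close>
  show "i \<in> accepting_sellers n c (\<lambda>i. if i \<in> fst ` M then Max (cu ` fst ` M) else 0)"
    and "j \<in> accepting_buyers n v (\<lambda>j. if j \<in> snd ` M then Min (vl ` snd ` M) else 1)"
    unfolding accepting_sellers_def accepting_buyers_def by auto
qed

theorem lemma5p6:
  fixes n :: nat and \<delta> :: real
    and c v cl cu vl vu :: "nat \<Rightarrow> real"
    and M Mr :: "(nat \<times> nat) set"
  assumes c_range: "\<And>i. i < n \<Longrightarrow> 0 \<le> c i \<and> c i \<le> 1"
      and v_range: "\<And>j. j < n \<Longrightarrow> 0 \<le> v j \<and> v j \<le> 1"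
      and c_bounds: "\<And>i. i < n \<Longrightarrow> cl i \<le> c i \<and> c i \<le> cu i \<and> cu i - cl i \<le> \<delta>"
      and v_bounds: "\<And>j. j < n \<Longrightarrow> vl j \<le> v j \<and> v j \<le> vu j \<and> vu j - vl j \<le> \<delta>"
      and M_opt: "gft_optimal n cu vl M"
      and Mr_def: "max_card_matching n
            (accepting_sellers n c (\<lambda>i. if i \<in> fst ` M then Max (cu ` fst ` M) else 0))
            (accepting_buyers n v (\<lambda>j. if j \<in> snd ` M then Min (vl ` snd ` M) else 1))
            Mr"
  shows "gft c v Mr \<ge> GFT_star n c v - 2 * real n * \<delta>"
proof -
  have M: "is_matching n M" using M_opt unfolding gft_optimal_def by blast
  have Mr: "is_matching n Mr" using Mr_def unfolding max_card_matching_def by blast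
  have "card M \<le> card Mr"
    using Mr_def M matching_accepts_segmented_prices[OF M, of c cu vl v] c_bounds v_bounds
    unfolding max_card_matching_def by blast
  moreover have "c i \<le> 0" if "i \<in> fst ` Mr - fst ` M" for i
    using that Mr_def unfolding max_card_matching_def accepting_sellers_def by force
  moreover have "1 \<le> v j" if "j \<in> snd ` Mr - snd ` M" for j
    using that Mr_def unfolding max_card_matching_def accepting_buyers_def by force
  ultimately have "gft c v M \<le> gft c v Mr"
    using is_matching_range[OF M] c_range v_range
    by (intro gft_le_gft_of_larger_matching[OF M Mr]) auto
  moreover have "GFT_star n c v \<le> gft c v M + 2 * real n * \<delta>"
    using c_bounds v_bounds by (intro GFT_star_le_gft_of_perturbed_optimum[OF M_opt]) force+
  ultimately show ?thesis by linarith
qed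

end
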